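(* Let $m\geq 1$, let $\Lambda_m,\Delta_m\subseteq\mathbb{R}^{2^m}$ and $\Lambda_{m+1}\subseteq\mathbb{R}^{2^{m+1}}$ be the lattices defined below, and let $\iota,\tau:\mathbb{Z}^{2^m}\to\mathbb{Z}^{2^{m+1}}$ be the maps defined below. Then $\Lambda_{m+1}=\{\iota(\ell)+\iota(d)+\tau(\ell)\mid \ell\in\Lambda_m,\ d\in\Delta_m\}$.
   Context: For $n\ge 1$ let $\mathcal{V}_n=\mathbb{F}_2^n$ and let $(e_v\mid v\in\mathcal{V}_n)$ be an orthonormal basis of $\mathbb{R}^{2^n}$ indexed by $\mathcal{V}_n$; let $\Gamma_n=\langle e_v\mid v\in\mathcal{V}_n\rangle_{\mathbb{Z}}$. For $\mathcal{U}\subseteq\mathcal{V}_n$ put $x_{\mathcal{U}}=\sum_{v\in\mathcal{U}}e_v$. Define $\Lambda_n=\langle 2^{\lfloor (n-r)/2\rfloor}x_{\mathcal{U}} \mid 0\le r\le n,\ \mathcal{U}\text{ an affine subspace of }\mathcal{V}_n,\ \dim\mathcal{U}=r\rangle_{\mathbb{Z}}$ and $\Delta_n=\langle 2^{\lfloor (n-r+1)/2\rfloor}x_{\mathcal{U}} \mid 0\le r\le n,\ \mathcal{U}\text{ an affine subspace of }\mathcal{V}_n,\ \dim\mathcal{U}=r\rangle_{\mathbb{Z}}$. Fix a basis $(v_1,\dots,v_{m+1})$ of $\mathcal{V}_{m+1}$ and identify $\mathcal{V}_m$ with $\langle v_1,\dots,v_m\rangle$ via the embedding $\iota:\mathcal{V}_m\hookrightarrow\mathcal{V}_{m+1}$;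 let $\tau:\mathcal{V}_m\to\mathcal{V}_{m+1}$, $v\mapsto v_{m+1}+\iota(v)$, so $\mathcal{V}_{m+1}=\iota(\mathcal{V}_m)\,\dot\cup\,\tau(\mathcal{V}_m)$. Also denote by $\iota,\tau:\Gamma_m\to\Gamma_{m+1}$ the $\mathbb{Z}$-linear maps with $\iota(e_v)=e_{\iota(v)}$ and $\tau(e_v)=e_{\tau(v)}$ for $v\in\mathcal{V}_m$ (isometric embeddings with $\Gamma_{m+1}=\iota(\Gamma_m)\perp\tau(\Gamma_m)$). *)

theory Defs
  imports Main
begin

text \<open>Vectors of F_2^n are represented as subsets of {0..<n} (coordinates equal to 1);
  addition is symmetric difference.\<close>

definition Vsp :: "nat \<Rightarrow> nat set set" where
  "Vsp n = Pow {..<n}"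

definition vadd :: "nat set \<Rightarrow> nat set \<Rightarrow> nat set" where
  "vadd a c = (a - c) \<union> (c - a)"

text \<open>F_2-linear combination: sum of the vectors b i for i in S.\<close>
definition lincomb :: "(nat \<Rightarrow> nat set) \<Rightarrow> nat set \<Rightarrow> nat set" where
  "lincomb b S = {x. odd (card {i \<in> S. x \<in> b i})}"

definition affine_sub :: "nat \<Rightarrow> nat \<Rightarrow> nat set set \<Rightarrow> bool" where
  "affine_sub n r U \<longleftrightarrow> (\<exists>a b. a \<in> Vsp n \<and> (\<forall>i<r. b i \<in> Vsp n)
      \<and> inj_on (lincomb b) (Pow {..<r})
      \<and> U = {vadd a (lincomb b S) | S. S \<subseteq> {..<r}})"

text \<open>Vectors of R^{2^n} with integer coordinates indexed by F_2^n (all vectors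
  considered lie in Gamma_n); x_U is the indicator vector.\<close>
definition xvec :: "nat set set \<Rightarrow> (nat set \<Rightarrow> int)" where
  "xvec U = (\<lambda>v. if v \<in> U then 1 else 0)"

definition zspan :: "(nat set \<Rightarrow> int) set \<Rightarrow> (nat set \<Rightarrow> int) set" where
  "zspan G = {x. \<exists>F c. finite F \<and> F \<subseteq> G \<and> x = (\<lambda>v. \<Sum>g\<in>F. c g * g v)}"

definition Lam :: "nat \<Rightarrow> (nat set \<Rightarrow> int) set" where
  "Lam n = zspan {(\<lambda>v. 2 ^ ((n - r) div 2) * xvec U v) | r U. r \<le> n \<and> affine_sub n r U}"

definition Del :: "nat \<Rightarrow> (nat set \<Rightarrow> int) set" where
  "Del n = zspan {(\<lambda>v. 2 ^ ((n - r + 1) div 2) * xvec U v) | r U. r \<le> n \<and> affine_sub n r U}"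

text \<open>Given a basis b_0,...,b_m of F_2^{m+1} (paper: v_1..v_{m+1}), the embeddings
  iota(v) = sum_{i in v} b_i and tau(v) = b_m + iota(v) on F_2^m.\<close>
definition iota_v :: "(nat \<Rightarrow> nat set) \<Rightarrow> nat set \<Rightarrow> nat set" where
  "iota_v b v = lincomb b v"

definition tau_v :: "(nat \<Rightarrow> nat set) \<Rightarrow> nat \<Rightarrow> nat set \<Rightarrow> nat set" where
  "tau_v b m v = vadd (b m) (lincomb b v)"

definition iota_vec :: "(nat \<Rightarrow> nat set) \<Rightarrow> nat \<Rightarrow> (nat set \<Rightarrow> int) \<Rightarrow> (nat set \<Rightarrow> int)" where
  "iota_vec b m x = (\<lambda>w. \<Sum>v\<in>Vsp m. if iota_v b v = w then x v else 0)"

definition tau_vec :: "(nat \<Rightarrow> nat set) \<Rightarrow> nat \<Rightarrow> (nat set \<Rightarrow> int) \<Rightarrow> (nat set \<Rightarrow> int)" where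
  "tau_vec b m x = (\<lambda>w. \<Sum>v\<in>Vsp m. if tau_v b m v = w then x v else 0)"

end

theory Submission
  imports Defs
begin

text \<open>
  Using the basis \<open>b\<close>, write \<open>V\<^bsub>m+1\<^esub> = V\<^sub>m \<times> F\<^sub>2\<close>; then \<open>\<iota>\<close> and \<open>\<tau>\<close> embed \<open>V\<^sub>m\<close> as the
  two fibres over the last coordinate, and an affine subspace \<open>U\<close> of \<open>V\<^bsub>m+1\<^esub>\<close> of dimension \<open>r\<close>
  is \<open>\<iota>(P\<^sub>0) \<union> \<tau>(P\<^sub>1)\<close> for its two slices.  Either one slice is empty and the other has dimension
  \<open>r\<close>, or \<open>P\<^sub>0 = P\<^sub>1\<close> has dimension \<open>r - 1\<close>, or \<open>P\<^sub>0\<close> and \<open>P\<^sub>1\<close> are disjoint of dimension \<open>r - 1\<close>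
  with a union of dimension \<open>r\<close>.  With \<open>c = 2^\<lfloor>(m+1-r)/2\<rfloor>\<close>, the generator \<open>c x\<^sub>U\<close> of
  \<open>\<Lambda>\<^bsub>m+1\<^esub>\<close> is \<open>\<iota>(l + d) + \<tau>(l)\<close> with \<open>l = c x(P\<^sub>1) \<in> \<Lambda>\<^sub>m\<close> and \<open>d = c x(P\<^sub>0) - c x(P\<^sub>1) \<in> \<Delta>\<^sub>m\<close>;
  in the last case this is because \<open>d = 2c x(P\<^sub>0) - c x(P\<^sub>0 \<union> P\<^sub>1)\<close>.
  Conversely \<open>\<iota>(x\<^sub>U) + \<tau>(x\<^sub>U)\<close> is the indicator of \<open>U \<times> F\<^sub>2\<close>, whose dimension is one more than that
  of \<open>U\<close>, and \<open>\<iota>(x\<^sub>U)\<close> is the indicator of an affine subspace of the same dimension as \<open>U\<close>;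
  so the generators of \<open>\<Lambda>\<^sub>m\<close> and \<open>\<Delta>\<^sub>m\<close> are mapped into \<open>\<Lambda>\<^bsub>m+1\<^esub>\<close>.

  Affine subspaces are handled through their intrinsic description as nonempty sets of size \<open>2\<^sup>r\<close>
  closed under \<open>x + y + z\<close>, which avoids choosing bases.
\<close>

section \<open>Vectors of \<open>F\<^sub>2\<^sup>n\<close>\<close>

lemma in_vadd [simp]: "x \<in> vadd a c \<longleftrightarrow> (x \<in> a \<longleftrightarrow> x \<notin> c)"
  by (auto simp: vadd_def)

lemma vadd_self [simp]: "vadd a a = {}"
  by (simp add: vadd_def)

lemma vadd_empty [simp]: "vadd a {} = a" "vadd {} a = a"
  by (auto simp: vadd_def)

lemma vadd_cancel [simp]: "vadd a (vadd a x) = x"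
  by auto

lemma vadd_left_cancel [simp]: "vadd a x = vadd a y \<longleftrightarrow> x = y"
  by (metis vadd_cancel)

lemma vadd_eq_empty_iff [simp]: "vadd a c = {} \<longleftrightarrow> a = c"
  by (auto simp: vadd_def)

lemma finite_vadd: "finite a \<Longrightarrow> finite c \<Longrightarrow> finite (vadd a c)"
  by (simp add: vadd_def)

lemma mem_Vsp: "v \<in> Vsp n \<longleftrightarrow> v \<subseteq> {..<n}"
  by (simp add: Vsp_def)

lemma finite_Vsp [simp]: "finite (Vsp n)"
  by (simp add: Vsp_def)

lemma card_Vsp: "card (Vsp n) = 2 ^ n"
  by (simp add: Vsp_def card_Pow)

lemma finite_mem_Vsp: "v \<in> Vsp n \<Longrightarrow> finite v"
  by (auto simp: mem_Vsp intro: finite_subset)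

lemma Vsp_mono: "m \<le> n \<Longrightarrow> Vsp m \<subseteq> Vsp n"
  by (auto simp: Vsp_def)

lemma vadd_mem_Vsp: "a \<in> Vsp n \<Longrightarrow> c \<in> Vsp n \<Longrightarrow> vadd a c \<in> Vsp n"
  by (auto simp: mem_Vsp)

lemma lincomb_empty [simp]: "lincomb b {} = {}"
  by (simp add: lincomb_def)

lemma lincomb_singleton [simp]: "lincomb b {k} = b k"
  by (auto simp: lincomb_def Collect_conv_if)

lemma lincomb_Un_disjoint:
  assumes "finite S" "finite T" "S \<inter> T = {}"
  shows "lincomb b (S \<union> T) = vadd (lincomb b S) (lincomb b T)"
proof (rule set_eqI)
  fix x
  have "{i \<in> S \<union> T. x \<in> b i} = {i \<in> S. x \<in> b i} \<union> {i \<in> T. x \<in> b i}"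
    by auto
  then have "card {i \<in> S \<union> T. x \<in> b i} = card {i \<in> S. x \<in> b i} + card {i \<in> T. x \<in> b i}"
    using assms by (simp add: card_Un_disjoint disjoint_iff)
  then show "x \<in> lincomb b (S \<union> T) \<longleftrightarrow> x \<in> vadd (lincomb b S) (lincomb b T)"
    by (cases "odd (card {i \<in> S. x \<in> b i})") (simp_all add: lincomb_def)
qed

lemma lincomb_insert: "finite S \<Longrightarrow> k \<notin> S \<Longrightarrow> lincomb b (insert k S) = vadd (b k) (lincomb b S)"
  using lincomb_Un_disjoint[of "{k}" S b] by simp

lemma lincomb_split: "finite A \<Longrightarrow> lincomb b A = vadd (lincomb b (A - B)) (lincomb b (A \<inter> B))"
  using lincomb_Un_disjoint[of "A - B" "A \<inter> B" b] by (simp add: Un_Diff_Int Diff_Int_distrib2)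

lemma lincomb_vadd:
  assumes "finite S" "finite T"
  shows "lincomb b (vadd S T) = vadd (lincomb b S) (lincomb b T)"
proof -
  have "lincomb b (vadd S T) = vadd (lincomb b (S - T)) (lincomb b (T - S))"
    using assms lincomb_Un_disjoint[of "S - T" "T - S" b] by (simp add: vadd_def Diff_Int_distrib2)
  also have "\<dots> = vadd (vadd (lincomb b (S - T)) (lincomb b (S \<inter> T)))
                        (vadd (lincomb b (T - S)) (lincomb b (T \<inter> S)))"
    by (auto simp: Int_commute)
  also have "\<dots> = vadd (lincomb b S) (lincomb b T)"
    using assms by (simp flip: lincomb_split)
  finally show ?thesis .
qed

lemma lincomb_vadd_Vsp:
  "S \<in> Vsp n \<Longrightarrow> T \<in> Vsp n \<Longrightarrow> lincomb b (vadd S T) = vadd (lincomb b S) (lincomb b T)"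
  by (simp add: finite_mem_Vsp lincomb_vadd)

lemma lincomb_subset:
  assumes "\<And>i. i \<in> S \<Longrightarrow> b i \<subseteq> X"
  shows "lincomb b S \<subseteq> X"
proof
  fix x
  assume "x \<in> lincomb b S"
  then have "odd (card {i \<in> S. x \<in> b i})"
    by (simp add: lincomb_def)
  then have "{i \<in> S. x \<in> b i} \<noteq> {}"
    by (rule odd_card_imp_not_empty)
  then show "x \<in> X"
    using assms by blast
qed

section \<open>Affine subspaces\<close>

definition affine_closed :: "nat set set \<Rightarrow> bool" where
  "affine_closed U \<longleftrightarrow> (\<forall>x\<in>U. \<forall>y\<in>U. \<forall>z\<in>U. vadd x (vadd y z) \<in> U)"

definition subspace :: "nat set set \<Rightarrow> bool" where
  "subspace D \<longleftrightarrow> {} \<in> D \<and> (\<forall>x\<in>D. \<forall>y\<in>D. vadd x y \<in> D)"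

definition flat :: "nat \<Rightarrow> nat \<Rightarrow> nat set set \<Rightarrow> bool" where
  "flat n r U \<longleftrightarrow> U \<subseteq> Vsp n \<and> U \<noteq> {} \<and> affine_closed U \<and> card U = 2 ^ r"

lemma affine_closedD: "affine_closed U \<Longrightarrow> x \<in> U \<Longrightarrow> y \<in> U \<Longrightarrow> z \<in> U \<Longrightarrow> vadd x (vadd y z) \<in> U"
  by (simp add: affine_closed_def)

lemma affine_sub_imp_flat:
  assumes "affine_sub n r U"
  shows "flat n r U"
proof -
  obtain a b where a: "a \<in> Vsp n" and b: "\<forall>i<r. b i \<in> Vsp n"
    and inj: "inj_on (lincomb b) (Pow {..<r})"
    and U: "U = (\<lambda>S. vadd a (lincomb b S)) ` Pow {..<r}"
    using assms unfolding affine_sub_def by blast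
  have fin: "finite S" if "S \<in> Pow {..<r}" for S
    using that finite_subset by blast
  have "lincomb b S \<in> Vsp n" if "S \<in> Pow {..<r}" for S
    using b that unfolding mem_Vsp by (intro lincomb_subset) auto
  then have "U \<subseteq> Vsp n"
    using a by (auto simp: U vadd_mem_Vsp)
  moreover have "vadd x (vadd y z) \<in> U" if xyz: "x \<in> U" "y \<in> U" "z \<in> U" for x y z
  proof -
    obtain S T R where STR: "S \<subseteq> {..<r}" "T \<subseteq> {..<r}" "R \<subseteq> {..<r}"
      and xyz: "x = vadd a (lincomb b S)" "y = vadd a (lincomb b T)" "z = vadd a (lincomb b R)"
      using xyz by (auto simp: U)
    then have "lincomb b (vadd S (vadd T R)) = vadd (lincomb b S) (vadd (lincomb b T) (lincomb b R))"
      using fin by (simp add: lincomb_vadd finite_vadd)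
    then have "vadd x (vadd y z) = vadd a (lincomb b (vadd S (vadd T R)))"
      unfolding xyz by auto
    moreover have "vadd S (vadd T R) \<in> Pow {..<r}"
      using STR by auto
    ultimately show ?thesis
      unfolding U by blast
  qed
  then have "affine_closed U"
    by (simp add: affine_closed_def)
  moreover have "card U = 2 ^ r"
    unfolding U using inj by (subst card_image) (auto simp: inj_on_def card_Pow)
  ultimately show ?thesis
    by (auto simp: flat_def U)
qed

lemma lincomb_mem_subspace:
  assumes "subspace D" "finite S" "\<And>i. i \<in> S \<Longrightarrow> b i \<in> D"
  shows "lincomb b S \<in> D"
  using assms(2,3)
proof (induction S rule: finite_induct)
  case empty
  then show ?case
    using assms(1) by (simp add: subspace_def lincomb_def)
next
  case (insert k S)
  then show ?case
    using assms(1) by (simp add: subspace_def lincomb_insert)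
qed

lemma inj_on_lincomb_if_kernel_trivial:
  assumes "\<And>R. R \<subseteq> {..<k} \<Longrightarrow> lincomb b R = {} \<Longrightarrow> R = {}"
  shows "inj_on (lincomb b) (Pow {..<k})"
proof (rule inj_onI)
  fix S T
  assume S: "S \<in> Pow {..<k}" and T: "T \<in> Pow {..<k}" and eq: "lincomb b S = lincomb b T"
  have "finite S" "finite T"
    using S T finite_subset by auto
  then have "lincomb b (vadd S T) = {}"
    using eq by (simp add: lincomb_vadd)
  moreover have "vadd S T \<subseteq> {..<k}"
    using S T by auto
  ultimately have "vadd S T = {}"
    using assms by blast
  then show "S = T"
    by (auto simp: set_eq_iff)
qed

lemma inj_on_lincomb_extend:
  assumes inj: "inj_on (lincomb b) (Pow {..<k})" and d: "d \<notin> lincomb b ` Pow {..<k}"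
  shows "inj_on (lincomb (b(k := d))) (Pow {..<Suc k})"
proof (rule inj_on_lincomb_if_kernel_trivial)
  fix R
  assume R: "R \<subseteq> {..<Suc k}" and zero: "lincomb (b(k := d)) R = {}"
  have R': "R - {k} \<subseteq> {..<k}" and fin: "finite (R - {k})"
    using R finite_subset by (auto simp: less_Suc_eq)
  have low: "lincomb (b(k := d)) (R - {k}) = lincomb b (R - {k})"
  proof -
    have "{i \<in> R - {k}. x \<in> (b(k := d)) i} = {i \<in> R - {k}. x \<in> b i}" for x
      by auto
    then show ?thesis
      by (simp add: lincomb_def)
  qed
  show "R = {}"
  proof (cases "k \<in> R")
    case True
    then have "vadd d (lincomb b (R - {k})) = {}"
      using lincomb_insert[OF fin, of k "b(k := d)"] low zero by (simp add: insert_absorb)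
    then have "d = lincomb b (R - {k})"
      by simp
    then show ?thesis
      using d R' by auto
  next
    case False
    then have "R - {k} = R"
      by simp
    then have "lincomb b R = lincomb b {}"
      using low zero by simp
    moreover have "R \<in> Pow {..<k}" "{} \<in> Pow {..<k}"
      using R' \<open>R - {k} = R\<close> by auto
    ultimately show ?thesis
      by (rule inj_onD[OF inj])
  qed
qed

lemma lincomb_image_subset_subspace:
  "subspace D \<Longrightarrow> (\<And>i. i < k \<Longrightarrow> b i \<in> D) \<Longrightarrow> lincomb b ` Pow {..<k} \<subseteq> D"
  by (auto intro!: lincomb_mem_subspace intro: finite_subset)

lemma subspace_has_basis:
  assumes fin: "finite D" and D: "subspace D"
  obtains k b where "\<forall>i<k. b i \<in> D" "inj_on (lincomb b) (Pow {..<k})"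
    "lincomb b ` Pow {..<k} = D"
proof -
  define K where "K = {k. \<exists>b. (\<forall>i<k. b i \<in> D) \<and> inj_on (lincomb b) (Pow {..<k})}"
  have bounded: "k < card D" if k: "k \<in> K" for k
  proof -
    obtain b where b: "\<forall>i<k. b i \<in> D" "inj_on (lincomb b) (Pow {..<k})"
      using k by (auto simp: K_def)
    have "2 ^ k \<le> card D"
      using card_inj_on_le[OF b(2) lincomb_image_subset_subspace[OF D] fin] b(1)
      by (simp add: card_Pow)
    then show ?thesis
      using less_exp[of k] by linarith
  qed
  have "0 \<in> K"
    by (simp add: K_def)
  have "finite K"
    using bounded by (meson finite_nat_set_iff_bounded)
  define k where "k = Max K"
  have "k \<in> K"
    unfolding k_def using \<open>finite K\<close> \<open>0 \<in> K\<close> by (auto intro: Max_in)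
  then obtain b where b: "\<forall>i<k. b i \<in> D" "inj_on (lincomb b) (Pow {..<k})"
    by (auto simp: K_def)
  have "lincomb b ` Pow {..<k} = D"
  proof (rule ccontr)
    assume "lincomb b ` Pow {..<k} \<noteq> D"
    then obtain d where d: "d \<in> D" "d \<notin> lincomb b ` Pow {..<k}"
      using lincomb_image_subset_subspace[OF D] b(1) by blast
    then have "Suc k \<in> K"
      unfolding K_def using b inj_on_lincomb_extend[OF b(2) d(2)]
      by (auto simp: less_Suc_eq intro!: exI[of _ "b(k := d)"])
    then have "Suc k \<le> Max K"
      using Max_ge[OF \<open>finite K\<close>] by blast
    then show False
      by (simp add: k_def)
  qed
  then show thesis
    using that b by blast
qed

lemma subspace_translate:
  assumes U: "affine_closed U" and a: "a \<in> U"
  shows "subspace (vadd a ` U)"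
  unfolding subspace_def
proof (intro conjI ballI)
  show "{} \<in> vadd a ` U"
    using a by (intro image_eqI[where x = a]) simp_all
  fix x y
  assume "x \<in> vadd a ` U" "y \<in> vadd a ` U"
  then obtain u v where uv: "u \<in> U" "v \<in> U" "x = vadd a u" "y = vadd a v"
    by blast
  then have "vadd x y = vadd a (vadd u (vadd a v))"
    by auto
  then show "vadd x y \<in> vadd a ` U"
    using affine_closedD[OF U uv(1) a uv(2)] by blast
qed

lemma flat_imp_affine_sub:
  assumes "flat n r U"
  shows "affine_sub n r U"
proof -
  have U: "U \<subseteq> Vsp n" "U \<noteq> {}" "affine_closed U" "card U = 2 ^ r"
    using assms by (auto simp: flat_def)
  obtain a where a: "a \<in> U"
    using U(2) by blast
  define D where "D = vadd a ` U"
  have "finite U"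
    using U(1) finite_Vsp by (rule finite_subset)
  then have fin: "finite D"
    by (simp add: D_def)
  have sub: "subspace D"
    unfolding D_def using U(3) a by (rule subspace_translate)
  obtain k b where b: "\<forall>i<k. b i \<in> D" "inj_on (lincomb b) (Pow {..<k})"
    "lincomb b ` Pow {..<k} = D"
    using subspace_has_basis[OF fin sub] by blast
  have "inj_on (vadd a) U"
    by (simp add: inj_on_def)
  then have "card D = 2 ^ r"
    unfolding D_def using U(4) by (simp add: card_image)
  moreover have "card D = 2 ^ k"
    using card_image[OF b(2)] b(3) by (simp add: card_Pow)
  ultimately have "k = r"
    by simp
  have "a \<in> Vsp n"
    using a U(1) by blast
  then have "D \<subseteq> Vsp n"
    unfolding D_def using U(1) by (auto intro: vadd_mem_Vsp)
  have "U = vadd a ` D"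
    by (simp add: D_def image_image)
  also have "\<dots> = {vadd a (lincomb b S) | S. S \<subseteq> {..<r}}"
    unfolding b(3)[symmetric] \<open>k = r\<close> by blast
  finally show ?thesis
    unfolding affine_sub_def using \<open>a \<in> Vsp n\<close> \<open>D \<subseteq> Vsp n\<close> b(1,2) \<open>k = r\<close>
    by (intro exI[of _ a] exI[of _ b]) auto
qed

lemma affine_sub_iff_flat: "affine_sub n r U \<longleftrightarrow> flat n r U"
  using affine_sub_imp_flat flat_imp_affine_sub by blast

lemma flat_dim_le: "flat n r U \<Longrightarrow> r \<le> n"
  unfolding flat_def using card_mono[OF finite_Vsp, of U n] by (simp add: card_Vsp)

lemma flat_mono: "flat m r U \<Longrightarrow> m \<le> n \<Longrightarrow> flat n r U"
  using Vsp_mono by (auto simp: flat_def)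

lemma flat_image:
  assumes inj: "inj_on f (Vsp n)" and into: "f ` Vsp n \<subseteq> Vsp n'"
    and additive: "\<And>x y. x \<in> Vsp n \<Longrightarrow> y \<in> Vsp n \<Longrightarrow> f (vadd x y) = vadd (f x) (f y)"
    and U: "flat n r U"
  shows "flat n' r (f ` U)"
proof -
  have UV: "U \<subseteq> Vsp n" and closed: "affine_closed U"
    using U by (auto simp: flat_def)
  have "vadd (f x) (vadd (f y) (f z)) \<in> f ` U" if "x \<in> U" "y \<in> U" "z \<in> U" for x y z
  proof -
    have "x \<in> Vsp n" "y \<in> Vsp n" "z \<in> Vsp n"
      using that UV by auto
    then have "vadd (f x) (vadd (f y) (f z)) = f (vadd x (vadd y z))"
      by (simp add: additive vadd_mem_Vsp)
    then show ?thesis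
      using affine_closedD[OF closed that] by blast
  qed
  then have "affine_closed (f ` U)"
    by (auto simp: affine_closed_def)
  moreover have "card (f ` U) = card U"
    using inj_on_subset[OF inj UV] by (rule card_image)
  ultimately show ?thesis
    using U UV into by (auto simp: flat_def)
qed

lemma flat_preimage:
  assumes f: "bij_betw f (Vsp n) (Vsp n')"
    and additive: "\<And>x y. x \<in> Vsp n \<Longrightarrow> y \<in> Vsp n \<Longrightarrow> f (vadd x y) = vadd (f x) (f y)"
    and U: "flat n' r U"
  obtains P where "flat n r P" "U = f ` P"
proof -
  define g where "g = the_inv_into (Vsp n) f"
  have g: "bij_betw g (Vsp n') (Vsp n)"
    unfolding g_def using f by (rule bij_betw_the_inv_into)
  have fg: "f (g u) = u" if "u \<in> Vsp n'" for u
    unfolding g_def using f that by (simp add: bij_betw_def f_the_inv_into_f)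
  have "g (vadd x y) = vadd (g x) (g y)" if "x \<in> Vsp n'" "y \<in> Vsp n'" for x y
  proof -
    have "g x \<in> Vsp n" "g y \<in> Vsp n"
      using that g by (auto dest: bij_betwE)
    then have "g (f (vadd (g x) (g y))) = vadd (g x) (g y)"
      unfolding g_def by (intro the_inv_into_f_f bij_betw_imp_inj_on[OF f] vadd_mem_Vsp)
    moreover have "f (vadd (g x) (g y)) = vadd x y"
      using \<open>g x \<in> Vsp n\<close> \<open>g y \<in> Vsp n\<close> that by (simp add: additive fg)
    ultimately show ?thesis
      by simp
  qed
  then have "flat n r (g ` U)"
    using U by (rule flat_image[OF bij_betw_imp_inj_on[OF g] equalityD1[OF bij_betw_imp_surj_on[OF g]]])
  moreover have "U = f ` g ` U"
  proof -
    have "f (g u) = u" if "u \<in> U" for u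
      using that U fg by (auto simp: flat_def)
    then show ?thesis
      by (simp add: image_image cong: image_cong)
  qed
  ultimately show thesis
    by (rule that)
qed

section \<open>Splitting along the last coordinate\<close>

text \<open>Coordinate \<open>m\<close> identifies \<open>V\<^bsub>m+1\<^esub>\<close> with \<open>V\<^sub>m \<times> F\<^sub>2\<close>: \<open>lift m i v\<close> is the point \<open>(v, i)\<close>
  and \<open>slice m P i\<close> is the fibre of \<open>P\<close> over \<open>i\<close>.\<close>

definition lift :: "nat \<Rightarrow> bool \<Rightarrow> nat set \<Rightarrow> nat set" where
  "lift m i v = (if i then insert m v else v)"

definition slice :: "nat \<Rightarrow> nat set set \<Rightarrow> bool \<Rightarrow> nat set set" where
  "slice m P i = {v \<in> Vsp m. lift m i v \<in> P}"

lemma lift_mem_Vsp: "v \<in> Vsp m \<Longrightarrow> lift m i v \<in> Vsp (Suc m)"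
  by (auto simp: lift_def mem_Vsp)

lemma lift_eq_lift_iff:
  assumes "v \<in> Vsp m" "w \<in> Vsp m"
  shows "lift m i v = lift m j w \<longleftrightarrow> i = j \<and> v = w"
proof -
  have "m \<notin> v" "m \<notin> w"
    using assms by (auto simp: mem_Vsp)
  then show ?thesis
    by (cases i; cases j) (auto simp: lift_def insert_ident)
qed

lemma inj_on_lift: "inj_on (lift m i) (Vsp m)"
  by (rule inj_onI) (simp add: lift_eq_lift_iff)

lemma Diff_mem_Vsp: "u \<in> Vsp (Suc m) \<Longrightarrow> u - {m} \<in> Vsp m"
  by (auto simp: mem_Vsp less_Suc_eq)

lemma lift_Diff: "lift m (m \<in> u) (u - {m}) = u"
  by (simp add: lift_def insert_absorb)

lemma lift_vadd3:
  assumes "x \<in> Vsp m" "y \<in> Vsp m" "z \<in> Vsp m"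
  shows "vadd (lift m i x) (vadd (lift m j y) (lift m k z)) = lift m (i \<noteq> (j \<noteq> k)) (vadd x (vadd y z))"
  using assms unfolding lift_def mem_Vsp by (cases i; cases j; cases k) auto

lemma slice_subset_Vsp: "slice m P i \<subseteq> Vsp m"
  by (simp add: slice_def)

lemma slices_partition:
  assumes "P \<subseteq> Vsp (Suc m)"
  shows "P = lift m False ` slice m P False \<union> lift m True ` slice m P True"
proof
  show "P \<subseteq> lift m False ` slice m P False \<union> lift m True ` slice m P True"
  proof
    fix u
    assume "u \<in> P"
    moreover have "u - {m} \<in> Vsp m"
      using \<open>u \<in> P\<close> assms by (auto intro: Diff_mem_Vsp)
    moreover note lift_Diff[of m u, symmetric]
    ultimately show "u \<in> lift m False ` slice m P False \<union> lift m True ` slice m P True"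
      unfolding slice_def by (cases "m \<in> u") force+
  qed
qed (auto simp: slice_def)

lemma lift_images_disjoint:
  assumes "A \<subseteq> Vsp m" "B \<subseteq> Vsp m"
  shows "lift m False ` A \<inter> lift m True ` B = {}"
proof -
  have "lift m False v \<noteq> lift m True w" if "v \<in> A" "w \<in> B" for v w
  proof -
    have "v \<in> Vsp m" "w \<in> Vsp m"
      using that assms by auto
    then show ?thesis
      by (simp add: lift_eq_lift_iff)
  qed
  then show ?thesis
    by blast
qed

lemma card_slices:
  assumes "P \<subseteq> Vsp (Suc m)"
  shows "card P = card (slice m P False) + card (slice m P True)"
proof -
  have inj: "inj_on (lift m i) (slice m P i)" for i
    using inj_on_lift slice_subset_Vsp by (rule inj_on_subset)
  have "lift m False ` slice m P False \<inter> lift m True ` slice m P True = {}"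
    by (rule lift_images_disjoint[OF slice_subset_Vsp slice_subset_Vsp])
  then have "card P = card (lift m False ` slice m P False) + card (lift m True ` slice m P True)"
    by (subst slices_partition[OF assms])
      (simp add: card_Un_disjoint finite_subset[OF slice_subset_Vsp])
  then show ?thesis
    by (simp add: card_image[OF inj])
qed

lemma slice_vadd3:
  assumes "affine_closed P"
    and "x \<in> slice m P i" "y \<in> slice m P j" "z \<in> slice m P k"
  shows "vadd x (vadd y z) \<in> slice m P (i \<noteq> (j \<noteq> k))"
proof -
  have V: "x \<in> Vsp m" "y \<in> Vsp m" "z \<in> Vsp m"
    using assms(2-4) by (auto simp: slice_def)
  have "lift m i x \<in> P" "lift m j y \<in> P" "lift m k z \<in> P"
    using assms(2-4) by (simp_all add: slice_def)
  then have "vadd (lift m i x) (vadd (lift m j y) (lift m k z)) \<in> P"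
    by (rule affine_closedD[OF assms(1)])
  moreover have "vadd (lift m i x) (vadd (lift m j y) (lift m k z))
      = lift m (i \<noteq> (j \<noteq> k)) (vadd x (vadd y z))"
    using V by (rule lift_vadd3)
  moreover have "vadd x (vadd y z) \<in> Vsp m"
    using V by (simp add: vadd_mem_Vsp)
  ultimately show ?thesis
    by (simp add: slice_def)
qed

lemma affine_closed_slice:
  assumes "affine_closed P"
  shows "affine_closed (slice m P i)"
proof -
  have "vadd x (vadd y z) \<in> slice m P i"
    if "x \<in> slice m P i" "y \<in> slice m P i" "z \<in> slice m P i" for x y z
    using slice_vadd3[OF assms that] by simp
  then show ?thesis
    by (simp add: affine_closed_def)
qed

lemma affine_closed_slices_Un:
  assumes "affine_closed P"
  shows "affine_closed (slice m P False \<union> slice m P True)"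
proof -
  have Un: "slice m P False \<union> slice m P True = {x. \<exists>i. x \<in> slice m P i}"
    by (auto simp: ex_bool_eq)
  have "vadd x (vadd y z) \<in> slice m P (i \<noteq> (j \<noteq> k))"
    if "x \<in> slice m P i" "y \<in> slice m P j" "z \<in> slice m P k" for x y z i j k
    using slice_vadd3[OF assms that] .
  then show ?thesis
    unfolding affine_closed_def Un by blast
qed

lemma card_slices_eq:
  assumes "affine_closed P" and p: "p \<in> slice m P False" and q: "q \<in> slice m P True"
  shows "card (slice m P False) = card (slice m P True)"
proof -
  define h where "h x = vadd x (vadd p q)" for x
  have swap: "h x \<in> slice m P (\<not> i)" if "x \<in> slice m P i" for x i
    using slice_vadd3[OF assms(1) that p q] by (simp add: h_def)
  have "bij_betw h (slice m P False) (slice m P True)"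
  proof (rule bij_betw_byWitness[where f' = h])
    show "h ` slice m P False \<subseteq> slice m P True" "h ` slice m P True \<subseteq> slice m P False"
      using swap[of _ False] swap[of _ True] by auto
  qed (auto simp: h_def)
  then show ?thesis
    by (rule bij_betw_same_card)
qed

lemma slices_eq_if_meet:
  assumes "affine_closed P" and x: "x \<in> slice m P False" "x \<in> slice m P True"
  shows "slice m P False = slice m P True"
proof (intro equalityI subsetI)
  fix y
  assume "y \<in> slice m P False"
  from slice_vadd3[OF assms(1) this x(1) x(2)] show "y \<in> slice m P True"
    by simp
next
  fix y
  assume "y \<in> slice m P True"
  from slice_vadd3[OF assms(1) x(1) x(2) this] show "y \<in> slice m P False"
    by simp
qed

lemma flat_slice:
  assumes "affine_closed P" "slice m P i \<noteq> {}" "card (slice m P i) = 2 ^ s"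
  shows "flat m s (slice m P i)"
  using assms slice_subset_Vsp affine_closed_slice by (simp add: flat_def)

lemma card_slices_flat:
  assumes "flat (Suc m) r P"
  shows "card (slice m P False) + card (slice m P True) = 2 ^ r"
  using assms card_slices[of P m] by (simp add: flat_def)

lemma flat_slices_halve:
  assumes P: "flat (Suc m) r P" and ne: "slice m P False \<noteq> {}" "slice m P True \<noteq> {}"
  shows "r \<ge> 1 \<and> flat m (r - 1) (slice m P False) \<and> flat m (r - 1) (slice m P True)"
proof -
  have closed: "affine_closed P"
    using P by (simp add: flat_def)
  then have same: "card (slice m P False) = card (slice m P True)"
    using ne card_slices_eq by blast
  then have "2 ^ r = 2 * card (slice m P True)"
    using card_slices_flat[OF P] by simp
  then obtain s where "r = Suc s" "card (slice m P True) = 2 ^ s"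
    by (cases r) auto
  then show ?thesis
    using ne same by (simp add: flat_slice[OF closed])
qed

lemma flat_slices_Un:
  assumes P: "flat (Suc m) r P"
    and disjoint: "slice m P False \<inter> slice m P True = {}" and ne: "slice m P False \<noteq> {}"
  shows "flat m r (slice m P False \<union> slice m P True)"
proof -
  have "finite (slice m P i)" for i
    using slice_subset_Vsp finite_Vsp by (rule finite_subset)
  then have "card (slice m P False \<union> slice m P True) = 2 ^ r"
    using card_slices_flat[OF P] disjoint by (simp add: card_Un_disjoint)
  moreover have "slice m P False \<union> slice m P True \<subseteq> Vsp m"
    using slice_subset_Vsp by blast
  moreover have "affine_closed (slice m P False \<union> slice m P True)"
    using P affine_closed_slices_Un by (simp add: flat_def)
  ultimately show ?thesis
    using ne by (simp add: flat_def)
qed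

lemma flat_slices_cases:
  assumes P: "flat (Suc m) r P"
  obtains (upper_empty) "slice m P True = {}" "flat m r (slice m P False)"
  | (lower_empty) "slice m P False = {}" "flat m r (slice m P True)"
  | (equal) "r \<ge> 1" "slice m P False = slice m P True" "flat m (r - 1) (slice m P True)"
  | (disjoint) "r \<ge> 1" "slice m P False \<inter> slice m P True = {}"
      "flat m (r - 1) (slice m P False)" "flat m (r - 1) (slice m P True)"
      "flat m r (slice m P False \<union> slice m P True)"
proof -
  have closed: "affine_closed P"
    using P by (simp add: flat_def)
  consider "slice m P True = {}" | "slice m P False = {}"
    | "slice m P False \<noteq> {}" "slice m P True \<noteq> {}"
    by blast
  then show thesis
  proof cases
    case 1
    then have "card (slice m P False) = 2 ^ r"
      using card_slices_flat[OF P] by simp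
    then have "flat m r (slice m P False)"
      by (intro flat_slice[OF closed]) auto
    then show thesis
      by (rule upper_empty[OF 1])
  next
    case 2
    then have "card (slice m P True) = 2 ^ r"
      using card_slices_flat[OF P] by simp
    then have "flat m r (slice m P True)"
      by (intro flat_slice[OF closed]) auto
    then show thesis
      by (rule lower_empty[OF 2])
  next
    case 3
    then have halves: "r \<ge> 1" "flat m (r - 1) (slice m P False)" "flat m (r - 1) (slice m P True)"
      using flat_slices_halve[OF P] by blast+
    show thesis
    proof (cases "slice m P False \<inter> slice m P True = {}")
      case True
      then show thesis
        using disjoint halves flat_slices_Un[OF P True 3(1)] by blast
    next
      case False
      then show thesis
        using equal halves slices_eq_if_meet[OF closed] by blast
    qed
  qed
qed

lemma flat_cylinder:
  assumes "flat m r A"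
  shows "flat (Suc m) (Suc r) (lift m False ` A \<union> lift m True ` A)"
proof -
  have A: "A \<subseteq> Vsp m" "A \<noteq> {}" "affine_closed A" "card A = 2 ^ r"
    using assms by (auto simp: flat_def)
  let ?Q = "lift m False ` A \<union> lift m True ` A"
  have disjoint: "lift m False ` A \<inter> lift m True ` A = {}"
    using A(1) A(1) by (rule lift_images_disjoint)
  have "card (lift m i ` A) = 2 ^ r" for i
    using card_image[OF inj_on_subset[OF inj_on_lift A(1)]] A(4) by simp
  then have "card ?Q = 2 ^ Suc r"
    using disjoint A(1) by (simp add: card_Un_disjoint finite_subset)
  moreover have "affine_closed ?Q"
  proof -
    have Q: "?Q = (\<Union>i. lift m i ` A)"
      by (auto simp: UNIV_bool)
    have "vadd u (vadd v w) \<in> ?Q" if Quvw: "u \<in> ?Q" "v \<in> ?Q" "w \<in> ?Q" for u v w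
    proof -
      obtain i j k x y z where xyz: "x \<in> A" "y \<in> A" "z \<in> A"
        and uvw: "u = lift m i x" "v = lift m j y" "w = lift m k z"
        using Quvw unfolding Q by blast
      have "x \<in> Vsp m" "y \<in> Vsp m" "z \<in> Vsp m"
        using xyz A(1) by auto
      then have "vadd u (vadd v w) = lift m (i \<noteq> (j \<noteq> k)) (vadd x (vadd y z))"
        unfolding uvw by (rule lift_vadd3)
      moreover have "vadd x (vadd y z) \<in> A"
        using affine_closedD[OF A(3) xyz] .
      ultimately show ?thesis
        unfolding Q by blast
    qed
    then show ?thesis
      by (simp add: affine_closed_def)
  qed
  moreover have "?Q \<subseteq> Vsp (Suc m)"
    using A(1) lift_mem_Vsp by blast
  ultimately show ?thesis
    using A(2) by (simp add: flat_def)
qed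

section \<open>Integer lattices\<close>

type_synonym zvec = "nat set \<Rightarrow> int"

definition zmodule :: "zvec set \<Rightarrow> bool" where
  "zmodule S \<longleftrightarrow> (\<lambda>v. 0) \<in> S \<and> (\<forall>x\<in>S. \<forall>y\<in>S. (\<lambda>v. x v + y v) \<in> S) \<and> (\<forall>k. \<forall>x\<in>S. (\<lambda>v. k * x v) \<in> S)"

lemma zmodule_zero: "zmodule S \<Longrightarrow> (\<lambda>v. 0) \<in> S"
  by (simp add: zmodule_def)

lemma zmodule_add: "zmodule S \<Longrightarrow> x \<in> S \<Longrightarrow> y \<in> S \<Longrightarrow> (\<lambda>v. x v + y v) \<in> S"
  by (simp add: zmodule_def)

lemma zmodule_smult: "zmodule S \<Longrightarrow> x \<in> S \<Longrightarrow> (\<lambda>v. k * x v) \<in> S"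
  by (simp add: zmodule_def)

lemma zmodule_diff: "zmodule S \<Longrightarrow> x \<in> S \<Longrightarrow> y \<in> S \<Longrightarrow> (\<lambda>v. x v - y v) \<in> S"
  using zmodule_add[of S x "\<lambda>v. -1 * y v"] zmodule_smult[of S y "-1"] by simp

lemma zspan_superset: "g \<in> G \<Longrightarrow> g \<in> zspan G"
  unfolding zspan_def by (intro CollectI exI[of _ "{g}"] exI[of _ "\<lambda>_. 1"]) auto

lemma zmodule_zspan: "zmodule (zspan G)"
proof -
  have "(\<lambda>v. 0) \<in> zspan G"
    unfolding zspan_def by (intro CollectI exI[of _ "{}"]) auto
  moreover have "(\<lambda>v. x v + y v) \<in> zspan G" if xy: "x \<in> zspan G" "y \<in> zspan G" for x y
  proof -
    obtain F c F' c' where F: "finite F" "F \<subseteq> G" "x = (\<lambda>v. \<Sum>g\<in>F. c g * g v)"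
      and F': "finite F'" "F' \<subseteq> G" "y = (\<lambda>v. \<Sum>g\<in>F'. c' g * g v)"
      using xy unfolding zspan_def by blast
    define d where "d g = (if g \<in> F then c g else 0) + (if g \<in> F' then c' g else 0)" for g
    have "(\<Sum>g\<in>F. c g * g v) = (\<Sum>g\<in>F \<union> F'. (if g \<in> F then c g else 0) * g v)"
      and "(\<Sum>g\<in>F'. c' g * g v) = (\<Sum>g\<in>F \<union> F'. (if g \<in> F' then c' g else 0) * g v)" for v
      by (rule sum.mono_neutral_cong_left; use F(1) F'(1) in simp)+
    then have "(\<lambda>v. x v + y v) = (\<lambda>v. \<Sum>g\<in>F \<union> F'. d g * g v)"
      unfolding F(3) F'(3) d_def by (simp add: distrib_right sum.distrib)
    moreover have "finite (F \<union> F')" "F \<union> F' \<subseteq> G"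
      using F F' by auto
    ultimately show ?thesis
      unfolding zspan_def by (intro CollectI exI[of _ "F \<union> F'"] exI[of _ d]) simp
  qed
  moreover have "(\<lambda>v. k * x v) \<in> zspan G" if x: "x \<in> zspan G" for x k
  proof -
    obtain F c where F: "finite F" "F \<subseteq> G" "x = (\<lambda>v. \<Sum>g\<in>F. c g * g v)"
      using x unfolding zspan_def by blast
    then show ?thesis
      unfolding zspan_def
      by (intro CollectI exI[of _ F] exI[of _ "\<lambda>g. k * c g"]) (simp add: sum_distrib_left mult.assoc)
  qed
  ultimately show ?thesis
    by (simp add: zmodule_def)
qed

lemma zspan_least:
  assumes "zmodule S" "G \<subseteq> S"
  shows "zspan G \<subseteq> S"
proof
  fix x
  assume "x \<in> zspan G"
  then obtain F c where F: "finite F" "F \<subseteq> G" "x = (\<lambda>v. \<Sum>g\<in>F. c g * g v)"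
    unfolding zspan_def by blast
  have "(\<lambda>v. \<Sum>g\<in>F. c g * g v) \<in> S"
    using F(1,2)
  proof (induction F rule: finite_induct)
    case empty
    then show ?case
      using zmodule_zero[OF assms(1)] by simp
  next
    case (insert g F)
    then have "(\<lambda>v. c g * g v + (\<Sum>g\<in>F. c g * g v)) \<in> S"
      using assms by (intro zmodule_add zmodule_smult) auto
    then show ?case
      using insert by simp
  qed
  then show "x \<in> S"
    using F(3) by simp
qed

definition zlinear :: "(zvec \<Rightarrow> zvec) \<Rightarrow> bool" where
  "zlinear T \<longleftrightarrow> (\<forall>x y. T (\<lambda>v. x v + y v) = (\<lambda>w. T x w + T y w))
    \<and> (\<forall>k x. T (\<lambda>v. k * x v) = (\<lambda>w. k * T x w))"

lemma zlinear_add: "zlinear T \<Longrightarrow> T (\<lambda>v. x v + y v) = (\<lambda>w. T x w + T y w)"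
  by (simp add: zlinear_def)

lemma zlinear_smult: "zlinear T \<Longrightarrow> T (\<lambda>v. k * x v) = (\<lambda>w. k * T x w)"
  by (simp add: zlinear_def)

lemma zlinear_zero: "zlinear T \<Longrightarrow> T (\<lambda>v. 0) = (\<lambda>w. 0)"
  using zlinear_smult[of T 0 "\<lambda>v. 0"] by simp

lemma zlinear_sum: "zlinear S \<Longrightarrow> zlinear T \<Longrightarrow> zlinear (\<lambda>x w. S x w + T x w)"
  by (simp add: zlinear_def fun_eq_iff algebra_simps)

lemma zmodule_vimage: "zlinear T \<Longrightarrow> zmodule S \<Longrightarrow> zmodule {x. T x \<in> S}"
  by (simp add: zmodule_def zlinear_add zlinear_smult zlinear_zero)

lemma zspan_linear_image:
  assumes "zlinear T" "zmodule S" "\<And>g. g \<in> G \<Longrightarrow> T g \<in> S" "x \<in> zspan G"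
  shows "T x \<in> S"
  using zspan_least[OF zmodule_vimage[OF assms(1,2)]] assms(3,4) by blast

definition push :: "(nat set \<Rightarrow> nat set) \<Rightarrow> nat set set \<Rightarrow> zvec \<Rightarrow> zvec" where
  "push f A x = (\<lambda>w. \<Sum>v\<in>A. if f v = w then x v else 0)"

lemma zlinear_push: "zlinear (push f A)"
proof -
  have "(if f v = w then x v + y v else 0) = (if f v = w then x v else 0) + (if f v = w then y v else 0)"
    and "(if f v = w then k * x v else 0) = k * (if f v = w then x v else 0)"
    for x y :: zvec and k v w
    by simp_all
  then show ?thesis
    unfolding zlinear_def push_def by (simp add: sum.distrib sum_distrib_left)
qed

lemma push_indicator:
  assumes fin: "finite A" and inj: "inj_on f A" and S: "S \<subseteq> A"
  shows "push f A (\<lambda>v. c * xvec S v) = (\<lambda>w. c * xvec (f ` S) w)"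
proof
  fix w
  show "push f A (\<lambda>v. c * xvec S v) w = c * xvec (f ` S) w"
  proof (cases "w \<in> f ` A")
    case True
    then obtain v0 where v0: "v0 \<in> A" "w = f v0"
      by blast
    have "push f A (\<lambda>v. c * xvec S v) w = (\<Sum>v\<in>A. if v = v0 then c * xvec S v else 0)"
      unfolding push_def using inj v0 by (intro sum.cong refl) (auto dest: inj_onD)
    also have "\<dots> = c * xvec S v0"
      using v0 fin by simp
    also have "\<dots> = c * xvec (f ` S) w"
      using v0 S inj by (simp add: xvec_def inj_on_image_mem_iff)
    finally show ?thesis .
  next
    case False
    then have "push f A (\<lambda>v. c * xvec S v) w = 0"
      unfolding push_def by (auto intro!: sum.neutral)
    moreover have "w \<notin> f ` S"
      using False S by auto
    ultimately show ?thesis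
      by (simp add: xvec_def)
  qed
qed

lemma xvec_Un_disjoint: "A \<inter> B = {} \<Longrightarrow> xvec (A \<union> B) v = xvec A v + xvec B v"
  by (auto simp: xvec_def)

lemma xvec_empty [simp]: "xvec {} = (\<lambda>v. 0)"
  by (simp add: xvec_def fun_eq_iff)

lemma zmodule_Lam [simp]: "zmodule (Lam n)"
  by (simp add: Lam_def zmodule_zspan)

lemma zmodule_Del [simp]: "zmodule (Del n)"
  by (simp add: Del_def zmodule_zspan)

lemma zmodule_pow2_smult:
  assumes "zmodule S" "(\<lambda>v. 2 ^ e * x v) \<in> S" "e \<le> e'"
  shows "(\<lambda>v. 2 ^ e' * x v) \<in> S"
proof -
  have "(\<lambda>v. 2 ^ (e' - e) * (2 ^ e * x v)) \<in> S"
    using assms(1,2) by (rule zmodule_smult)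
  moreover have "(2::int) ^ (e' - e) * 2 ^ e = 2 ^ e'"
    using assms(3) by (simp flip: power_add)
  ultimately show ?thesis
    by (simp add: mult.assoc[symmetric])
qed

lemma flat_indicator_in_Lam:
  assumes "flat n r U" "(n - r) div 2 \<le> e"
  shows "(\<lambda>v. 2 ^ e * xvec U v) \<in> Lam n"
proof -
  have "(\<lambda>v. 2 ^ ((n - r) div 2) * xvec U v) \<in> Lam n"
    unfolding Lam_def using assms(1) flat_dim_le[OF assms(1)]
    by (intro zspan_superset CollectI exI[of _ r] exI[of _ U]) (simp add: affine_sub_iff_flat)
  then show ?thesis
    using assms(2) by (rule zmodule_pow2_smult[OF zmodule_Lam])
qed

lemma flat_indicator_in_Del:
  assumes "flat n r U" "(n - r + 1) div 2 \<le> e"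
  shows "(\<lambda>v. 2 ^ e * xvec U v) \<in> Del n"
proof -
  have "(\<lambda>v. 2 ^ ((n - r + 1) div 2) * xvec U v) \<in> Del n"
    unfolding Del_def using assms(1) flat_dim_le[OF assms(1)]
    by (intro zspan_superset CollectI exI[of _ r] exI[of _ U]) (simp add: affine_sub_iff_flat)
  then show ?thesis
    using assms(2) by (rule zmodule_pow2_smult[OF zmodule_Del])
qed

section \<open>The construction of \<open>\<Lambda>\<^bsub>m+1\<^esub>\<close>\<close>

lemma indicator_diff_in_Del:
  assumes P0: "flat m (r - 1) P0" and P: "flat m r (P0 \<union> P1)"
    and disjoint: "P0 \<inter> P1 = {}" and "r \<ge> 1"
  defines "e \<equiv> (Suc m - r) div 2"
  shows "(\<lambda>v. 2 ^ e * xvec P0 v - 2 ^ e * xvec P1 v) \<in> Del m"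
proof -
  have e0: "(m - (r - 1) + 1) div 2 \<le> Suc e" and e: "(m - r + 1) div 2 \<le> e"
    unfolding e_def using \<open>r \<ge> 1\<close> flat_dim_le[OF P] by presburger+
  have "(\<lambda>v. 2 ^ Suc e * xvec P0 v - 2 ^ e * xvec (P0 \<union> P1) v) \<in> Del m"
    using flat_indicator_in_Del[OF P0 e0] flat_indicator_in_Del[OF P e]
    by (rule zmodule_diff[OF zmodule_Del])
  moreover have "(\<lambda>v. 2 ^ Suc e * xvec P0 v - 2 ^ e * xvec (P0 \<union> P1) v)
      = (\<lambda>v. 2 ^ e * xvec P0 v - 2 ^ e * xvec P1 v)"
    using disjoint by (simp add: fun_eq_iff xvec_Un_disjoint algebra_simps)
  ultimately show ?thesis
    by simp
qed

lemma slices_in_Lam_Del: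
  assumes P: "flat (Suc m) r P"
  defines "e \<equiv> (Suc m - r) div 2"
  shows "(\<lambda>v. 2 ^ e * xvec (slice m P True) v) \<in> Lam m
    \<and> (\<lambda>v. 2 ^ e * xvec (slice m P False) v - 2 ^ e * xvec (slice m P True) v) \<in> Del m"
  using P
proof (cases rule: flat_slices_cases)
  case upper_empty
  have "(m - r + 1) div 2 \<le> e"
    unfolding e_def using flat_dim_le[OF upper_empty(2)] by presburger
  then have "(\<lambda>v. 2 ^ e * xvec (slice m P False) v) \<in> Del m"
    by (rule flat_indicator_in_Del[OF upper_empty(2)])
  then show ?thesis
    using upper_empty(1) by (simp add: zmodule_zero)
next
  case lower_empty
  have "(m - r) div 2 \<le> e" "(m - r + 1) div 2 \<le> e"
    unfolding e_def using flat_dim_le[OF lower_empty(2)] by presburger+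
  then have "(\<lambda>v. 2 ^ e * xvec (slice m P True) v) \<in> Lam m"
    and "(\<lambda>v. 2 ^ e * xvec (slice m P True) v) \<in> Del m"
    using lower_empty(2) by (simp_all add: flat_indicator_in_Lam flat_indicator_in_Del)
  then show ?thesis
    using lower_empty(1) zmodule_smult[OF zmodule_Del, of _ m "-1"] by simp
next
  case equal
  have "(m - (r - 1)) div 2 \<le> e"
    unfolding e_def using equal(1) by presburger
  then have "(\<lambda>v. 2 ^ e * xvec (slice m P True) v) \<in> Lam m"
    by (rule flat_indicator_in_Lam[OF equal(3)])
  then show ?thesis
    using equal(2) by (simp add: zmodule_zero)
next
  case disjoint
  have "(m - (r - 1)) div 2 \<le> e"
    unfolding e_def using disjoint(1) by presburger
  then have "(\<lambda>v. 2 ^ e * xvec (slice m P True) v) \<in> Lam m"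
    by (rule flat_indicator_in_Lam[OF disjoint(4)])
  moreover have "(\<lambda>v. 2 ^ e * xvec (slice m P False) v - 2 ^ e * xvec (slice m P True) v) \<in> Del m"
    unfolding e_def using disjoint(3,5,2,1) by (rule indicator_diff_in_Del)
  ultimately show ?thesis
    by blast
qed

lemma iota_vec_eq_push: "iota_vec b m = push (iota_v b) (Vsp m)"
  by (simp add: fun_eq_iff iota_vec_def push_def)

lemma tau_vec_eq_push: "tau_vec b m = push (tau_v b m) (Vsp m)"
  by (simp add: fun_eq_iff tau_vec_def push_def)

text \<open>The \<open>(u + v | u)\<close> construction: \<open>l + d\<close> on the fibre \<open>\<iota>(V\<^sub>m)\<close> and \<open>l\<close> on \<open>\<tau>(V\<^sub>m)\<close>.\<close>

definition plotkin_sum :: "(nat \<Rightarrow> nat set) \<Rightarrow> nat \<Rightarrow> zvec set \<Rightarrow> zvec set \<Rightarrow> zvec set" where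
  "plotkin_sum b m L D =
    {(\<lambda>w. iota_vec b m l w + iota_vec b m d w + tau_vec b m l w) | l d. l \<in> L \<and> d \<in> D}"

lemma zmodule_plotkin_sum:
  assumes L: "zmodule L" and D: "zmodule D"
  shows "zmodule (plotkin_sum b m L D)"
proof -
  have lin: "zlinear (iota_vec b m)" "zlinear (tau_vec b m)"
    by (simp_all add: iota_vec_eq_push tau_vec_eq_push zlinear_push)
  have "(\<lambda>v. 0) \<in> plotkin_sum b m L D"
    unfolding plotkin_sum_def using zmodule_zero[OF L] zmodule_zero[OF D]
    by (intro CollectI exI[of _ "\<lambda>v. 0"]) (simp add: zlinear_zero[OF lin(1)] zlinear_zero[OF lin(2)])
  moreover have "(\<lambda>v. x v + y v) \<in> plotkin_sum b m L D"
    if xy: "x \<in> plotkin_sum b m L D" "y \<in> plotkin_sum b m L D" for x y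
  proof -
    obtain l d l' d' where ld: "l \<in> L" "d \<in> D" "l' \<in> L" "d' \<in> D"
      and x: "x = (\<lambda>w. iota_vec b m l w + iota_vec b m d w + tau_vec b m l w)"
      and y: "y = (\<lambda>w. iota_vec b m l' w + iota_vec b m d' w + tau_vec b m l' w)"
      using xy unfolding plotkin_sum_def by blast
    have "(\<lambda>v. x v + y v) = (\<lambda>w. iota_vec b m (\<lambda>v. l v + l' v) w
        + iota_vec b m (\<lambda>v. d v + d' v) w + tau_vec b m (\<lambda>v. l v + l' v) w)"
      unfolding x y zlinear_add[OF lin(1)] zlinear_add[OF lin(2)] by (simp add: algebra_simps)
    then show ?thesis
      unfolding plotkin_sum_def using zmodule_add[OF L ld(1,3)] zmodule_add[OF D ld(2,4)] by blast
  qed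
  moreover have "(\<lambda>v. k * x v) \<in> plotkin_sum b m L D" if x: "x \<in> plotkin_sum b m L D" for x k
  proof -
    obtain l d where ld: "l \<in> L" "d \<in> D"
      and x: "x = (\<lambda>w. iota_vec b m l w + iota_vec b m d w + tau_vec b m l w)"
      using x unfolding plotkin_sum_def by blast
    have "(\<lambda>v. k * x v) = (\<lambda>w. iota_vec b m (\<lambda>v. k * l v) w
        + iota_vec b m (\<lambda>v. k * d v) w + tau_vec b m (\<lambda>v. k * l v) w)"
      unfolding x zlinear_smult[OF lin(1)] zlinear_smult[OF lin(2)] by (simp add: algebra_simps)
    then show ?thesis
      unfolding plotkin_sum_def using zmodule_smult[OF L ld(1)] zmodule_smult[OF D ld(2)] by blast
  qed
  ultimately show ?thesis
    by (simp add: zmodule_def)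
qed

lemma tau_v_eq:
  assumes "v \<in> Vsp m"
  shows "tau_v b m v = lincomb b (lift m True v)"
proof -
  have "finite v" "m \<notin> v"
    using assms by (auto simp: mem_Vsp finite_mem_Vsp)
  then show ?thesis
    by (simp add: tau_v_def lift_def lincomb_insert)
qed

context
  fixes m :: nat and b :: "nat \<Rightarrow> nat set"
  assumes lincomb_bij: "bij_betw (lincomb b) (Vsp (Suc m)) (Vsp (Suc m))"
begin

lemma inj_on_lincomb: "inj_on (lincomb b) (Vsp (Suc m))"
  using lincomb_bij by (rule bij_betw_imp_inj_on)

lemma iota_v_eq: "iota_v b = (\<lambda>v. lincomb b (lift m False v))"
  by (simp add: fun_eq_iff iota_v_def lift_def)

lemma inj_on_lincomb_lift: "inj_on (\<lambda>v. lincomb b (lift m i v)) (Vsp m)"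
proof (rule inj_onI)
  fix v w
  assume v: "v \<in> Vsp m" and w: "w \<in> Vsp m"
    and eq: "lincomb b (lift m i v) = lincomb b (lift m i w)"
  then have "lift m i v = lift m i w"
    using inj_onD[OF inj_on_lincomb eq] lift_mem_Vsp by blast
  then show "v = w"
    using v w by (simp add: lift_eq_lift_iff)
qed

lemma inj_on_iota_v: "inj_on (iota_v b) (Vsp m)"
  using inj_on_lincomb_lift[of False] by (simp add: iota_v_eq)

lemma inj_on_tau_v: "inj_on (tau_v b m) (Vsp m)"
  using inj_on_lincomb_lift[of True] unfolding inj_on_def by (simp add: tau_v_eq)

lemma iota_tau_images_disjoint:
  assumes "A \<subseteq> Vsp m" "B \<subseteq> Vsp m"
  shows "iota_v b ` A \<inter> tau_v b m ` B = {}"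
proof -
  have "iota_v b ` A \<inter> tau_v b m ` B = lincomb b ` (lift m False ` A) \<inter> lincomb b ` (lift m True ` B)"
    using assms by (auto simp: iota_v_eq tau_v_eq image_image subset_iff cong: image_cong)
  also have "\<dots> = lincomb b ` (lift m False ` A \<inter> lift m True ` B)"
    using assms lift_mem_Vsp by (intro inj_on_image_Int[OF inj_on_lincomb, symmetric]) auto
  finally show ?thesis
    using lift_images_disjoint[OF assms] by simp
qed

lemma lincomb_image_slices:
  assumes "P \<subseteq> Vsp (Suc m)"
  shows "lincomb b ` P = iota_v b ` slice m P False \<union> tau_v b m ` slice m P True"
proof -
  have "lincomb b ` P = lincomb b ` lift m False ` slice m P False \<union> lincomb b ` lift m True ` slice m P True"
    by (subst slices_partition[OF assms]) (simp add: image_Un)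
  also have "\<dots> = iota_v b ` slice m P False \<union> tau_v b m ` slice m P True"
    using slice_subset_Vsp by (auto simp: image_image iota_v_eq tau_v_eq subset_iff cong: image_cong)
  finally show ?thesis .
qed

lemma flat_lincomb_image: "flat (Suc m) r P \<Longrightarrow> flat (Suc m) r (lincomb b ` P)"
  by (rule flat_image[OF inj_on_lincomb equalityD1[OF bij_betw_imp_surj_on[OF lincomb_bij]]
        lincomb_vadd_Vsp])

lemma flat_lincomb_preimage:
  assumes "flat (Suc m) r U"
  obtains P where "flat (Suc m) r P" "U = lincomb b ` P"
  using flat_preimage[OF lincomb_bij lincomb_vadd_Vsp[of _ "Suc m"] assms] by blast

lemma flat_indicator_in_plotkin_sum:
  assumes "flat (Suc m) r U"
  shows "(\<lambda>v. 2 ^ ((Suc m - r) div 2) * xvec U v) \<in> plotkin_sum b m (Lam m) (Del m)"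
proof -
  obtain P where P: "flat (Suc m) r P" and U: "U = lincomb b ` P"
    using flat_lincomb_preimage[OF assms] by blast
  define c :: int where "c = 2 ^ ((Suc m - r) div 2)"
  let ?P0 = "slice m P False" and ?P1 = "slice m P True"
  define l where "l v = c * xvec ?P1 v" for v
  define d where "d v = c * xvec ?P0 v - c * xvec ?P1 v" for v
  have "l \<in> Lam m" "d \<in> Del m"
    using slices_in_Lam_Del[OF P] unfolding l_def d_def c_def by auto
  have "U = iota_v b ` ?P0 \<union> tau_v b m ` ?P1"
    unfolding U using P by (simp add: flat_def lincomb_image_slices)
  then have "(\<lambda>v. c * xvec U v) = (\<lambda>w. iota_vec b m (\<lambda>v. c * xvec ?P0 v) w + tau_vec b m l w)"
    unfolding l_def iota_vec_eq_push tau_vec_eq_push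
    using iota_tau_images_disjoint[OF slice_subset_Vsp slice_subset_Vsp]
    by (simp add: push_indicator inj_on_iota_v inj_on_tau_v slice_subset_Vsp xvec_Un_disjoint
        distrib_left)
  also have "(\<lambda>v. c * xvec ?P0 v) = (\<lambda>v. l v + d v)"
    by (simp add: l_def d_def fun_eq_iff)
  finally have "(\<lambda>v. c * xvec U v) = (\<lambda>w. iota_vec b m l w + iota_vec b m d w + tau_vec b m l w)"
    by (simp add: iota_vec_eq_push zlinear_add[OF zlinear_push])
  then show ?thesis
    unfolding plotkin_sum_def c_def using \<open>l \<in> Lam m\<close> \<open>d \<in> Del m\<close> by blast
qed

lemma Lam_Suc_subset_plotkin_sum: "Lam (Suc m) \<subseteq> plotkin_sum b m (Lam m) (Del m)"
  unfolding Lam_def[of "Suc m"]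
proof (rule zspan_least[OF zmodule_plotkin_sum[OF zmodule_Lam zmodule_Del]], rule subsetI)
  fix g
  assume "g \<in> {(\<lambda>v. 2 ^ ((Suc m - r) div 2) * xvec U v) | r U. r \<le> Suc m \<and> affine_sub (Suc m) r U}"
  then obtain r U where g: "g = (\<lambda>v. 2 ^ ((Suc m - r) div 2) * xvec U v)" and "affine_sub (Suc m) r U"
    by blast
  then have "flat (Suc m) r U"
    by (simp add: affine_sub_iff_flat)
  then show "g \<in> plotkin_sum b m (Lam m) (Del m)"
    unfolding g by (rule flat_indicator_in_plotkin_sum)
qed

lemma iota_vec_indicator:
  assumes "U \<subseteq> Vsp m"
  shows "iota_vec b m (\<lambda>v. c * xvec U v) = (\<lambda>w. c * xvec (lincomb b ` U) w)"
proof -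
  have "iota_v b ` U = lincomb b ` U"
    by (simp add: iota_v_def[abs_def])
  then show ?thesis
    using push_indicator[OF finite_Vsp inj_on_iota_v assms] by (simp add: iota_vec_eq_push)
qed

lemma iota_tau_vec_indicator:
  assumes U: "U \<subseteq> Vsp m"
  shows "(\<lambda>w. iota_vec b m (\<lambda>v. c * xvec U v) w + tau_vec b m (\<lambda>v. c * xvec U v) w)
    = (\<lambda>w. c * xvec (lincomb b ` (lift m False ` U \<union> lift m True ` U)) w)"
proof -
  have "lincomb b ` (lift m False ` U \<union> lift m True ` U) = iota_v b ` U \<union> tau_v b m ` U"
    using U by (auto simp: image_Un image_image iota_v_eq tau_v_eq subset_iff cong: image_cong)
  then show ?thesis
    using iota_tau_images_disjoint[OF U U] U
    by (simp add: iota_vec_eq_push tau_vec_eq_push push_indicator inj_on_iota_v inj_on_tau_v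
        xvec_Un_disjoint distrib_left)
qed

lemma iota_plus_tau_mem_Lam_Suc:
  assumes "l \<in> Lam m"
  shows "(\<lambda>w. iota_vec b m l w + tau_vec b m l w) \<in> Lam (Suc m)"
proof (rule zspan_linear_image[where T = "\<lambda>x w. iota_vec b m x w + tau_vec b m x w"])
  show "zlinear (\<lambda>x w. iota_vec b m x w + tau_vec b m x w)"
    by (simp add: iota_vec_eq_push tau_vec_eq_push zlinear_sum zlinear_push)
  show "l \<in> zspan {(\<lambda>v. 2 ^ ((m - r) div 2) * xvec U v) | r U. r \<le> m \<and> affine_sub m r U}"
    using assms by (simp add: Lam_def)
  fix g
  assume "g \<in> {(\<lambda>v. 2 ^ ((m - r) div 2) * xvec U v) | r U. r \<le> m \<and> affine_sub m r U}"
  then obtain r U where g: "g = (\<lambda>v. 2 ^ ((m - r) div 2) * xvec U v)" and "affine_sub m r U"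
    by blast
  then have U: "flat m r U"
    by (simp add: affine_sub_iff_flat)
  then have "flat (Suc m) (Suc r) (lincomb b ` (lift m False ` U \<union> lift m True ` U))"
    by (rule flat_lincomb_image[OF flat_cylinder])
  then have "(\<lambda>w. 2 ^ ((m - r) div 2) * xvec (lincomb b ` (lift m False ` U \<union> lift m True ` U)) w)
      \<in> Lam (Suc m)"
    by (rule flat_indicator_in_Lam) simp
  then show "(\<lambda>w. iota_vec b m g w + tau_vec b m g w) \<in> Lam (Suc m)"
    using U unfolding g by (simp add: iota_tau_vec_indicator flat_def)
qed simp

lemma iota_mem_Lam_Suc:
  assumes "d \<in> Del m"
  shows "iota_vec b m d \<in> Lam (Suc m)"
proof (rule zspan_linear_image[where T = "iota_vec b m"])
  show "zlinear (iota_vec b m)"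
    by (simp add: iota_vec_eq_push zlinear_push)
  show "d \<in> zspan {(\<lambda>v. 2 ^ ((m - r + 1) div 2) * xvec U v) | r U. r \<le> m \<and> affine_sub m r U}"
    using assms by (simp add: Del_def)
  fix g
  assume "g \<in> {(\<lambda>v. 2 ^ ((m - r + 1) div 2) * xvec U v) | r U. r \<le> m \<and> affine_sub m r U}"
  then obtain r U where g: "g = (\<lambda>v. 2 ^ ((m - r + 1) div 2) * xvec U v)" and "affine_sub m r U"
    by blast
  then have U: "flat m r U"
    by (simp add: affine_sub_iff_flat)
  then have "flat (Suc m) r (lincomb b ` U)"
    by (intro flat_lincomb_image flat_mono[OF U]) simp
  moreover have "(Suc m - r) div 2 \<le> (m - r + 1) div 2"
    by presburger
  ultimately have "(\<lambda>w. 2 ^ ((m - r + 1) div 2) * xvec (lincomb b ` U) w) \<in> Lam (Suc m)"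
    by (rule flat_indicator_in_Lam)
  then show "iota_vec b m g \<in> Lam (Suc m)"
    using U unfolding g by (simp add: iota_vec_indicator flat_def)
qed simp

lemma plotkin_sum_subset_Lam_Suc: "plotkin_sum b m (Lam m) (Del m) \<subseteq> Lam (Suc m)"
proof
  fix x
  assume "x \<in> plotkin_sum b m (Lam m) (Del m)"
  then obtain l d where "l \<in> Lam m" "d \<in> Del m"
    and x: "x = (\<lambda>w. iota_vec b m l w + iota_vec b m d w + tau_vec b m l w)"
    unfolding plotkin_sum_def by blast
  then have "(\<lambda>w. (iota_vec b m l w + tau_vec b m l w) + iota_vec b m d w) \<in> Lam (Suc m)"
    by (intro zmodule_add[OF zmodule_Lam] iota_plus_tau_mem_Lam_Suc iota_mem_Lam_Suc)
  then show "x \<in> Lam (Suc m)"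
    unfolding x by (simp add: ac_simps)
qed

end

theorem theorem3p2:
  fixes m :: nat and b :: "nat \<Rightarrow> nat set"
  assumes "m \<ge> 1"
    and "\<forall>i\<le>m. b i \<in> Vsp (Suc m)"
    and "bij_betw (lincomb b) (Pow {..<Suc m}) (Vsp (Suc m))"
  shows "Lam (Suc m) =
    {(\<lambda>w. iota_vec b m l w + iota_vec b m d w + tau_vec b m l w) | l d. l \<in> Lam m \<and> d \<in> Del m}"
proof -
  have "bij_betw (lincomb b) (Vsp (Suc m)) (Vsp (Suc m))"
    using assms(3) by (simp add: Vsp_def)
  then have "Lam (Suc m) = plotkin_sum b m (Lam m) (Del m)"
    by (intro equalityI Lam_Suc_subset_plotkin_sum plotkin_sum_subset_Lam_Suc)
  then show ?thesis
    by (simp add: plotkin_sum_def)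
qed

end
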